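(* Let $n\ge1$, $R>0$, and let $f\colon\mathbb{R}^n\to(0,\infty)$ be a twice continuously differentiable convex function with $|t|^2+f(t)^2>R^2$ for all $t\in\mathbb{R}^n$. Let $$\alpha(t)=\frac{\langle t,\nabla f(t)\rangle-f(t)}{\sqrt{1+|\nabla f(t)|^2}},\qquad D=\{t\in\mathbb{R}^n\mid\alpha(t)<R\}.$$ Then the map $x\colon D\to\mathbb{R}^n$, $$x(t)=t+\frac{1}{2\sqrt{1+|\nabla f(t)|^2}}\cdot\frac{|t|^2+f(t)^2-R^2}{R-\alpha(t)}\,\nabla f(t),$$ is a bijection from $D$ onto $\mathbb{R}^n$ whose Jacobian determinant vanishes nowhere on $D$.
   Context: $\langle\cdot,\cdot\rangle$ and $|\cdot|$ are the Euclidean inner product and norm on $\mathbb{R}^n$. *)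

theory Defs
  imports "HOL-Analysis.Analysis"
begin

definition alpha_fun :: "(real^'n \<Rightarrow> real) \<Rightarrow> (real^'n \<Rightarrow> real^'n) \<Rightarrow> real^'n \<Rightarrow> real" where
  "alpha_fun f gf t = (t \<bullet> gf t - f t) / sqrt (1 + (norm (gf t))\<^sup>2)"

definition D_set :: "(real^'n \<Rightarrow> real) \<Rightarrow> (real^'n \<Rightarrow> real^'n) \<Rightarrow> real \<Rightarrow> (real^'n) set" where
  "D_set f gf R = {t. alpha_fun f gf t < R}"

definition x_map :: "(real^'n \<Rightarrow> real) \<Rightarrow> (real^'n \<Rightarrow> real^'n) \<Rightarrow> real \<Rightarrow> real^'n \<Rightarrow> real^'n" where
  "x_map f gf R t = t + ((1 / (2 * sqrt (1 + (norm (gf t))\<^sup>2))) *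
      (((norm t)\<^sup>2 + (f t)\<^sup>2 - R\<^sup>2) / (R - alpha_fun f gf t))) *\<^sub>R gf t"

end

theory Submission
  imports Defs
begin

text \<open>Let \<open>E\<close> be the epigraph of \<open>f\<close>: a closed convex set lying outside the closed ball
  \<open>B\<close> of radius \<open>R\<close>. A point \<open>t \<in> D\<close> corresponds to a ball that touches the graph at
  \<open>(t, f t)\<close> from below along the normal \<open>(\<nabla>f t, -1)\<close> and touches \<open>B\<close> from outside;
  its centre is \<open>(x t, f t - \<lambda> t)\<close> with \<open>x t = t + \<lambda> t \<nabla>f t\<close>.
  Conversely, for fixed \<open>x\<close> such balls centred at \<open>(x, s)\<close> are exactly the zeros of
  \<open>g s = dist ((x, s), E) - (|(x, s)| - R)\<close>, their contact point being the nearest point of \<open>E\<close>.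
  The function \<open>g\<close> is positive far below and negative far above the graph, and squeezing it
  between the distances to the contact point and to the tangent hyperplane shows that it
  crosses every zero downwards; so it has exactly one zero, and since nearest points in convex
  sets are unique, \<open>x\<close> is bijective.

  Differentiating \<open>x = t + \<lambda> \<nabla>f\<close> gives \<open>dx h = h + d\<lambda> h \<nabla>f + \<lambda> \<nabla>\<^sup>2f h\<close>; for \<open>h\<close> in
  the kernel the derivative of the defining relation of \<open>\<lambda>\<close> forces \<open>d\<lambda> h = \<langle>\<nabla>f, h\<rangle>\<close>, and then
  \<open>0 = \<langle>h, dx h\<rangle> = |h|\<^sup>2 + \<langle>\<nabla>f, h\<rangle>\<^sup>2 + \<lambda> \<langle>h, \<nabla>\<^sup>2f h\<rangle>\<close> with a positive semidefinite Hessian.\<close>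

section \<open>Gradients of convex functions\<close>

lemma convex_on_line:
  fixes f :: "'a::real_vector \<Rightarrow> real"
  assumes "convex_on UNIV f"
  shows "convex_on UNIV (\<lambda>u::real. f (a + u *\<^sub>R d))"
  unfolding convex_on_def
proof (intro conjI ballI allI impI)
  fix x y u v :: real assume uv: "0 \<le> u" "0 \<le> v" "u + v = 1"
  have "a + (u *\<^sub>R x + v *\<^sub>R y) *\<^sub>R d = u *\<^sub>R (a + x *\<^sub>R d) + v *\<^sub>R (a + y *\<^sub>R d)"
    using uv by (simp add: algebra_simps flip: scaleR_add_left)
  also have "f \<dots> \<le> u * f (a + x *\<^sub>R d) + v * f (a + y *\<^sub>R d)"
    using assms uv unfolding convex_on_def by blast
  finally show "f (a + (u *\<^sub>R x + v *\<^sub>R y) *\<^sub>R d) \<le> u * f (a + x *\<^sub>R d) + v * f (a + y *\<^sub>R d)" .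
qed simp

lemma convex_on_has_derivative_above_tangent:
  fixes f :: "'a::real_normed_vector \<Rightarrow> real"
  assumes convex: "convex_on UNIV f" and deriv: "(f has_derivative f') (at t)"
  shows "f t + f' (y - t) \<le> f y"
proof -
  define \<phi> where "\<phi> u = f (t + u *\<^sub>R (y - t))" for u
  have line: "((\<lambda>u::real. t + u *\<^sub>R (y - t)) has_derivative (\<lambda>u. u *\<^sub>R (y - t))) (at 0)"
    by (auto intro!: derivative_eq_intros)
  have "(\<phi> has_derivative (\<lambda>u. f' (u *\<^sub>R (y - t)))) (at 0)"
    unfolding \<phi>_def using has_derivative_compose[OF line] deriv by simp
  moreover have "(\<lambda>u. f' (u *\<^sub>R (y - t))) = (\<lambda>u. f' (y - t) * u)"
    using linear_scale[OF has_derivative_linear[OF deriv]] by auto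
  ultimately have "(\<phi> has_real_derivative f' (y - t)) (at 0 within UNIV)"
    by (simp add: has_field_derivative_def)
  moreover have "convex_on UNIV \<phi>"
    unfolding \<phi>_def by (rule convex_on_line[OF convex])
  ultimately have "f' (y - t) * (1 - 0) \<le> \<phi> 1 - \<phi> 0"
    by (intro convex_on_imp_above_tangent) auto
  then
  show ?thesis by (simp add: \<phi>_def)
qed

lemma convex_on_gradient_monotone:
  fixes f :: "'a::real_inner \<Rightarrow> real"
  assumes convex: "convex_on UNIV f" and grad: "\<And>t. (f has_derivative (\<lambda>h. gf t \<bullet> h)) (at t)"
  shows "0 \<le> (gf a - gf b) \<bullet> (a - b)"
proof -
  have "f b + gf b \<bullet> (a - b) \<le> f a" "f a + gf a \<bullet> (b - a) \<le> f b"
    using convex_on_has_derivative_above_tangent[OF convex grad] by blast+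
  then show ?thesis by (simp add: algebra_simps)
qed

lemma convex_on_gradient_derivative_nonneg:
  fixes f :: "'a::real_inner \<Rightarrow> real"
  assumes convex: "convex_on UNIV f" and grad: "\<And>t. (f has_derivative (\<lambda>h. gf t \<bullet> h)) (at t)"
    and hess: "(gf has_derivative H) (at t)"
  shows "0 \<le> h \<bullet> H h"
proof (rule ccontr)
  assume neg: "\<not> 0 \<le> h \<bullet> H h"
  define \<phi> where "\<phi> u = gf (t + u *\<^sub>R h) \<bullet> h" for u
  have mono: "\<phi> 0 \<le> \<phi> u" if "u > 0" for u
  proof -
    have "0 \<le> (gf (t + u *\<^sub>R h) - gf t) \<bullet> ((t + u *\<^sub>R h) - t)"
      by (rule convex_on_gradient_monotone[OF convex grad])
    also have "\<dots> = u * (\<phi> u - \<phi> 0)"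
      by (simp add: \<phi>_def algebra_simps)
    finally show ?thesis using that by (simp add: zero_le_mult_iff)
  qed
  have line: "((\<lambda>u::real. t + u *\<^sub>R h) has_derivative (\<lambda>u. u *\<^sub>R h)) (at 0)"
    by (auto intro!: derivative_eq_intros)
  have "((\<lambda>u. gf (t + u *\<^sub>R h)) has_derivative (\<lambda>u. H (u *\<^sub>R h))) (at 0)"
    using has_derivative_compose[OF line] hess by simp
  then have "(\<phi> has_derivative (\<lambda>u. H (u *\<^sub>R h) \<bullet> h)) (at 0)"
    unfolding \<phi>_def by (auto intro!: derivative_eq_intros)
  moreover have "(\<lambda>u. H (u *\<^sub>R h) \<bullet> h) = (\<lambda>u. (h \<bullet> H h) * u)"
    using linear_scale[OF has_derivative_linear[OF hess]] by (auto simp: inner_commute)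
  ultimately have "(\<phi> has_real_derivative (h \<bullet> H h)) (at 0)"
    unfolding has_field_derivative_def by simp
  from DERIV_neg_dec_right[OF this] neg obtain d where "d > 0" "\<forall>u>0. u < d \<longrightarrow> \<phi> (0 + u) < \<phi> 0"
    by force
  then have "\<phi> (d / 2) < \<phi> 0" by simp
  with mono[of "d / 2"] \<open>d > 0\<close> show False by simp
qed

section \<open>Zeros crossed downwards\<close>

lemma continuous_down_crossing_zero_unique:
  fixes g :: "real \<Rightarrow> real"
  assumes cont: "continuous_on UNIV g"
    and crossing: "\<And>s. g s = 0 \<Longrightarrow> \<exists>d>0. \<forall>h>0. h < d \<longrightarrow> g (s + h) < 0 \<and> g (s - h) > 0"
    and zeros: "g s1 = 0" "g s2 = 0"
  shows "s1 = s2"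
proof -
  have False if zero_a: "g a = 0" and zero_b: "g b = 0" and "a < b" for a b
  proof -
    obtain d where d: "d > 0" "\<forall>h>0. h < d \<longrightarrow> g (a + h) < 0"
      using crossing[OF zero_a] by blast
    define a' where "a' = a + min (d / 2) ((b - a) / 2)"
    have "g a' < 0" using d \<open>a < b\<close> by (auto simp: a'_def)
    have "a' < b" using \<open>a < b\<close> by (auto simp: a'_def min_def field_simps)
    define Z where "Z = {c. a' \<le> c \<and> c \<le> b \<and> g c = 0}"
    have "closed Z"
      unfolding Z_def
      by (intro closed_Collect_conj closed_Collect_le closed_Collect_eq cont continuous_on_id continuous_on_const)
    moreover have "bdd_below Z" "b \<in> Z"
      using \<open>a' < b\<close> zero_b by (auto simp: Z_def)
    ultimately have "Inf Z \<in> Z" using closed_contains_Inf by blast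
    define c where "c = Inf Z"
    have "c \<in> Z" using \<open>Inf Z \<in> Z\<close> by (simp add: c_def)
    then have "a' \<le> c" "g c = 0" by (simp_all add: Z_def)
    with \<open>g a' < 0\<close> have "a' < c" by (cases "c = a'") auto
    obtain e where e: "e > 0" "\<forall>h>0. h < e \<longrightarrow> g (c - h) > 0"
      using crossing[OF \<open>g c = 0\<close>] by blast
    define b' where "b' = c - min (e / 2) ((c - a') / 2)"
    have "g b' > 0" using e \<open>a' < c\<close> by (auto simp: b'_def)
    have "a' < b'" "b' < c" using e \<open>a' < c\<close> by (auto simp: b'_def min_def field_simps)
    moreover have "isCont g z" for z
      using cont by (simp add: continuous_on_eq_continuous_at)
    ultimately obtain z where "a' \<le> z" "z \<le> b'" "g z = 0"
      using IVT[of g a' 0 b'] \<open>g a' < 0\<close> \<open>g b' > 0\<close> by auto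
    then have "z \<in> Z" using \<open>b' < c\<close> \<open>c \<in> Z\<close> by (auto simp: Z_def)
    then have "c \<le> z" unfolding c_def using \<open>bdd_below Z\<close> by (rule cInf_lower)
    with \<open>z \<le> b'\<close> \<open>b' < c\<close> show False by simp
  qed
  then show ?thesis using zeros by (metis linorder_neqE_linordered_idom)
qed

lemma down_crossing_squeeze:
  fixes g F G :: "real \<Rightarrow> real"
  assumes lower: "\<And>s. G s \<le> g s" and upper: "\<And>s. g s \<le> F s"
    and zero: "F s0 = 0" "G s0 = 0"
    and F_deriv: "(F has_real_derivative F') (at s0)" "F' < 0"
    and G_deriv: "(G has_real_derivative G') (at s0)" "G' < 0"
  shows "g s0 = 0" and "\<exists>d>0. \<forall>h>0. h < d \<longrightarrow> g (s0 + h) < 0 \<and> g (s0 - h) > 0"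
proof -
  show "g s0 = 0" using lower[of s0] upper[of s0] zero by simp
  obtain d1 where d1: "d1 > 0" "\<forall>h>0. h < d1 \<longrightarrow> F (s0 + h) < F s0"
    using DERIV_neg_dec_right[OF F_deriv] by blast
  obtain d2 where d2: "d2 > 0" "\<forall>h>0. h < d2 \<longrightarrow> G s0 < G (s0 - h)"
    using DERIV_neg_dec_left[OF G_deriv] by blast
  show "\<exists>d>0. \<forall>h>0. h < d \<longrightarrow> g (s0 + h) < 0 \<and> g (s0 - h) > 0"
  proof (intro exI[of _ "min d1 d2"] conjI allI impI)
    fix h :: real assume "0 < h" "h < min d1 d2"
    then show "g (s0 + h) < 0" "g (s0 - h) > 0"
      using d1 d2 zero upper[of "s0 + h"] lower[of "s0 - h"] by force+
  qed (use d1 d2 in simp)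
qed

lemma DERIV_sqrt_add_square:
  assumes "0 < c + (s - a)\<^sup>2"
  shows "((\<lambda>s. sqrt (c + (s - a)\<^sup>2)) has_real_derivative (s - a) / sqrt (c + (s - a)\<^sup>2)) (at s)"
  using assms by (auto intro!: derivative_eq_intros simp: field_simps)

section \<open>Nearest points of an epigraph\<close>

lemma closed_epigraph:
  fixes f :: "'a::topological_space \<Rightarrow> real"
  assumes "continuous_on UNIV f"
  shows "closed (epigraph UNIV f)"
proof -
  have "closed {p::'a \<times> real. f (fst p) \<le> snd p}"
    by (intro closed_Collect_le continuous_on_compose2[OF assms] continuous_intros) auto
  then show ?thesis by (simp add: epigraph_def)
qed

lemma nearest_point_of_epigraph:
  fixes f :: "'a::euclidean_space \<Rightarrow> real"
  assumes convex: "convex_on UNIV f" and cont: "continuous_on UNIV f"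
    and outside: "(x, s) \<notin> epigraph UNIV f" and nearest_in: "(t, y) \<in> epigraph UNIV f"
    and nearest: "\<forall>z \<in> epigraph UNIV f. dist (x, s) (t, y) \<le> dist (x, s) z"
  shows "y = f t" and "s < f t"
proof -
  let ?E = "epigraph UNIV f"
  have obtuse: "((x, s) - (t, y)) \<bullet> (z - (t, y)) \<le> 0" if "z \<in> ?E" for z
    using any_closest_point_dot[OF convex_epigraphI[OF convex] closed_epigraph[OF cont]
        nearest_in that nearest] .
  have "f t \<le> y" using nearest_in by (simp add: mem_epigraph)
  have "s \<le> y" using obtuse[of "(t, y + 1)"] \<open>f t \<le> y\<close> by (simp add: mem_epigraph)
  moreover have "s \<noteq> y"
  proof
    assume "s = y"
    have "(x, max (f x) y) \<in> ?E" by (simp add: mem_epigraph)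
    from obtuse[OF this] have "(norm (x - t))\<^sup>2 \<le> 0"
      by (simp add: \<open>s = y\<close> power2_norm_eq_inner)
    then have "(x, s) = (t, y)" using \<open>s = y\<close> by simp
    with outside nearest_in show False by simp
  qed
  moreover have "(s - y) * (f t - y) \<le> 0"
    using obtuse[of "(t, f t)"] by (simp add: mem_epigraph)
  ultimately show "y = f t" and "s < f t"
    using \<open>f t \<le> y\<close> by (auto simp: mult_le_0_iff)
qed

lemma nearest_point_of_graph_normal:
  fixes f :: "'a::real_inner \<Rightarrow> real"
  assumes grad: "\<And>t. (f has_derivative (\<lambda>h. gf t \<bullet> h)) (at t)"
    and nearest: "\<And>t'. dist (x, s) (t, f t) \<le> dist (x, s) (t', f t')"
  shows "x = t + (f t - s) *\<^sub>R gf t"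
proof -
  define sqdist where "sqdist t' = (x - t') \<bullet> (x - t') + (s - f t')\<^sup>2" for t'
  have "sqdist t \<le> sqdist t'" for t'
  proof -
    have "(dist (x, s) (t, f t))\<^sup>2 \<le> (dist (x, s) (t', f t'))\<^sup>2"
      using nearest by (simp add: power_mono)
    moreover have "(dist (x, s) (u, f u))\<^sup>2 = sqdist u" for u
      unfolding dist_Pair_Pair by (simp add: sqdist_def dist_norm dist_real_def power2_norm_eq_inner)
    ultimately show ?thesis by simp
  qed
  moreover have "(sqdist has_derivative
      (\<lambda>k. (-k) \<bullet> (x - t) + (x - t) \<bullet> (-k) + 2 * (s - f t) * (- (gf t \<bullet> k)))) (at t)"
    unfolding sqdist_def by (auto intro!: derivative_eq_intros grad)
  ultimately have stationary:
    "(\<lambda>k. (-k) \<bullet> (x - t) + (x - t) \<bullet> (-k) + 2 * (s - f t) * (- (gf t \<bullet> k))) = (\<lambda>k. 0)"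
    using differential_zero_maxmin[OF _ open_UNIV] by blast
  define lam where "lam = f t - s"
  define v where "v = x - t - lam *\<^sub>R gf t"
  have "v \<bullet> v = v \<bullet> (x - t) - lam * (gf t \<bullet> v)"
    by (subst (2) v_def) (simp add: inner_diff_right inner_commute)
  with fun_cong[OF stationary, of v] have "v \<bullet> v = 0"
    by (simp add: lam_def inner_commute algebra_simps del: inner_eq_zero_iff)
  then have "v = 0" by simp
  then show ?thesis by (simp add: v_def lam_def algebra_simps)
qed

section \<open>Balls touching the graph and the sphere of radius \<open>R\<close>\<close>

locale convex_graph_outside_ball =
  fixes f :: "real^'n \<Rightarrow> real" and gf :: "real^'n \<Rightarrow> real^'n" and R :: real
  assumes R_pos: "R > 0"
    and f_pos: "\<And>t. f t > 0"
    and f_grad: "\<And>t. (f has_derivative (\<lambda>h. gf t \<bullet> h)) (at t)"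
    and f_convex: "convex_on UNIV f"
    and f_outside_ball: "\<And>t. (norm t)\<^sup>2 + (f t)\<^sup>2 > R\<^sup>2"
begin

definition normal_len :: "real^'n \<Rightarrow> real"
  where "normal_len t = sqrt (1 + (norm (gf t))\<^sup>2)"

definition epi :: "((real^'n) \<times> real) set"
  where "epi = epigraph UNIV f"

definition gap :: "real^'n \<Rightarrow> real \<Rightarrow> real"
  where "gap x s = infdist (x, s) epi - (norm (x, s) - R)"

text \<open>The ball of radius \<open>lam * normal_len t\<close> around \<open>(x, s) = (t, f t) + lam *\<^sub>R (gf t, -1)\<close>
  touches the graph of \<open>f\<close> at \<open>(t, f t)\<close> and the ball of radius \<open>R\<close> around the origin.\<close>
definition touching :: "real^'n \<Rightarrow> real \<Rightarrow> real^'n \<Rightarrow> real \<Rightarrow> bool"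
  where "touching x s t lam \<longleftrightarrow> lam > 0 \<and> x = t + lam *\<^sub>R gf t \<and> s = f t - lam
    \<and> norm (x, s) = R + lam * normal_len t"

definition excess :: "real^'n \<Rightarrow> real"
  where "excess t = (norm t)\<^sup>2 + (f t)\<^sup>2 - R\<^sup>2"

definition slack :: "real^'n \<Rightarrow> real"
  where "slack t = R * normal_len t - t \<bullet> gf t + f t"

definition shift :: "real^'n \<Rightarrow> real"
  where "shift t = excess t / (2 * slack t)"

lemma normal_len_pos: "normal_len t > 0"
  by (simp add: normal_len_def add_pos_nonneg)

lemma normal_len_sq: "(normal_len t)\<^sup>2 = 1 + (norm (gf t))\<^sup>2"
  by (simp add: normal_len_def)

lemma excess_pos: "excess t > 0"
  using f_outside_ball[of t] by (simp add: excess_def)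

lemma mem_epi [simp]: "(t, y) \<in> epi \<longleftrightarrow> f t \<le> y"
  by (simp add: epi_def mem_epigraph)

lemma continuous_on_f: "continuous_on UNIV f"
  using f_grad by (intro continuous_at_imp_continuous_on) (blast intro: has_derivative_continuous)

lemma closed_epi: "closed epi"
  unfolding epi_def using continuous_on_f by (rule closed_epigraph)

lemma convex_epi: "convex epi"
  unfolding epi_def using f_convex by (rule convex_epigraphI)

lemma epi_nonempty: "epi \<noteq> {}"
  using mem_epi[of 0 "f 0"] by blast

lemma norm_gt_if_mem_epi:
  assumes "p \<in> epi" shows "norm p > R"
proof -
  obtain t y where p: "p = (t, y)" by (cases p)
  have "0 < f t" "f t \<le> y" using f_pos assms by (simp_all add: p)
  then have "R\<^sup>2 < (norm t)\<^sup>2 + y\<^sup>2" using f_outside_ball[of t] power_mono[of "f t" y 2] by linarith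
  then have "sqrt (R\<^sup>2) < sqrt ((norm t)\<^sup>2 + y\<^sup>2)" by (rule real_sqrt_less_mono)
  then show ?thesis using R_pos by (simp add: p norm_Pair)
qed

text \<open>The epigraph lies above the tangent hyperplane at \<open>(t, f t)\<close>, whose unit normal is
  \<open>(gf t, -1) / normal_len t\<close>.\<close>
lemma infdist_epi_ge_tangent:
  "((x - t) \<bullet> gf t + f t - s) / normal_len t \<le> infdist (x, s) epi"
  unfolding infdist_notempty[OF epi_nonempty]
proof (rule cINF_greatest[OF epi_nonempty])
  fix z assume "z \<in> epi"
  obtain t' y' where z: "z = (t', y')" by (cases z)
  have "f t + gf t \<bullet> (t' - t) \<le> f t'"
    by (rule convex_on_has_derivative_above_tangent[OF f_convex f_grad])
  moreover have "f t' \<le> y'" using \<open>z \<in> epi\<close> z by simp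
  ultimately have "(x - t) \<bullet> gf t + f t - s \<le> ((x, s) - z) \<bullet> (gf t, -1)"
    by (simp add: z inner_commute algebra_simps)
  also have "\<dots> \<le> norm ((x, s) - z) * norm (gf t, -1::real)" by (rule norm_cauchy_schwarz)
  also have "norm (gf t, -1::real) = normal_len t" by (simp add: norm_Pair normal_len_def add.commute)
  finally show "((x - t) \<bullet> gf t + f t - s) / normal_len t \<le> dist (x, s) z"
    using normal_len_pos[of t] by (simp add: dist_norm divide_le_eq mult.commute)
qed

lemma infdist_epi_ge_neg:
  assumes "s < 0" shows "- s \<le> infdist (x, s) epi"
  unfolding infdist_notempty[OF epi_nonempty]
proof (rule cINF_greatest[OF epi_nonempty])
  fix z assume "z \<in> epi"
  obtain t y where z: "z = (t, y)" by (cases z)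
  have "0 < f t" by (rule f_pos)
  also have "f t \<le> y" using \<open>z \<in> epi\<close> z by simp
  finally have "- s \<le> dist s y" using assms by (simp add: dist_real_def)
  also have "\<dots> \<le> dist (x, s) z" using dist_snd_le[of "(x, s)" z] z by simp
  finally show "- s \<le> dist (x, s) z" .
qed

lemma continuous_on_gap: "continuous_on UNIV (gap x)"
  unfolding gap_def by (intro continuous_intros)

lemma gap_has_zero: "\<exists>s. gap x s = 0"
proof -
  define a where "a = - ((norm x)\<^sup>2 / R + 1)"
  define b where "b = max (f x) (R + 1)"
  have "(norm x)\<^sup>2 / R \<ge> 0" using R_pos by simp
  then have "a < 0" by (simp add: a_def)
  have "(R - a)\<^sup>2 - a\<^sup>2 = R\<^sup>2 + 2 * (norm x)\<^sup>2 + 2 * R"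
    using R_pos by (simp add: a_def power2_eq_square field_simps)
  moreover have "0 < R\<^sup>2" using R_pos by simp
  ultimately have "(norm x)\<^sup>2 + a\<^sup>2 < (R - a)\<^sup>2"
    using R_pos zero_le_power2[of "norm x"] by linarith
  then have "norm (x, a) < R - a"
    using real_sqrt_less_mono \<open>a < 0\<close> R_pos by (fastforce simp: norm_Pair)
  with infdist_epi_ge_neg[OF \<open>a < 0\<close>, of x] have "gap x a > 0" by (simp add: gap_def)
  have "R < b" by (simp add: b_def)
  also have "b \<le> norm (x, b)" using norm_snd_le[of b x] by simp
  finally have "gap x b < 0" by (simp add: gap_def b_def)
  have "a \<le> b" using \<open>a < 0\<close> R_pos by (simp add: b_def)
  with \<open>gap x a > 0\<close> \<open>gap x b < 0\<close> show ?thesis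
    using IVT2[of "gap x" b 0 a] continuous_on_gap continuous_on_eq_continuous_at by fastforce
qed

lemma dist_along_normal:
  "dist (t + lam *\<^sub>R gf t, f t - lam) (t, f t) = \<bar>lam\<bar> * normal_len t"
proof -
  have "(dist (t + lam *\<^sub>R gf t, f t - lam) (t, f t))\<^sup>2 = (\<bar>lam\<bar> * normal_len t)\<^sup>2"
    unfolding dist_Pair_Pair power_mult_distrib normal_len_sq
    by (simp add: dist_norm dist_real_def algebra_simps)
  then show ?thesis using normal_len_pos[of t] by simp
qed

lemma touching_slope_neg:
  assumes "touching x s0 t lam"
  shows "-1 / normal_len t - s0 / (R + lam * normal_len t) < 0"
proof -
  have "lam > 0" and s0: "s0 = f t - lam" using assms by (auto simp: touching_def)
  have "0 < R + f t * normal_len t"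
    using R_pos f_pos[of t] normal_len_pos[of t] by (simp add: add_pos_pos)
  then have "0 < (R + lam * normal_len t) + normal_len t * s0" by (simp add: s0 algebra_simps)
  then show ?thesis
    using normal_len_pos[of t] \<open>lam > 0\<close> R_pos by (simp add: field_simps add_pos_pos)
qed

lemma touching_gap_down_crossing:
  assumes "touching x s0 t lam"
  shows "gap x s0 = 0" and "\<exists>d>0. \<forall>h>0. h < d \<longrightarrow> gap x (s0 + h) < 0 \<and> gap x (s0 - h) > 0"
proof -
  define w where "w = normal_len t"
  have lam: "lam > 0" and x: "x = t + lam *\<^sub>R gf t" and s0: "s0 = f t - lam"
    and norm0: "norm (x, s0) = R + lam * w"
    using assms by (auto simp: touching_def w_def)
  have "w > 0" using normal_len_pos by (simp add: w_def)
  define A where "A = (norm (x - t))\<^sup>2"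
  define B where "B = (norm x)\<^sup>2"
  define F where "F s = sqrt (A + (s - f t)\<^sup>2) - (sqrt (B + (s - 0)\<^sup>2) - R)" for s
  define G where "G s = ((x - t) \<bullet> gf t + f t - s) / w - (sqrt (B + (s - 0)\<^sup>2) - R)" for s
  have norm_eq: "norm (x, s) = sqrt (B + (s - 0)\<^sup>2)" for s
    by (simp add: B_def norm_Pair)
  have upper: "gap x s \<le> F s" for s
    using infdist_le[of "(t, f t)" epi "(x, s)"]
    by (simp add: gap_def F_def A_def B_def dist_norm norm_Pair)
  have lower: "G s \<le> gap x s" for s
    using infdist_epi_ge_tangent[of x t s] by (simp add: gap_def G_def norm_eq w_def)
  have root0: "sqrt (B + (s0 - 0)\<^sup>2) = R + lam * w" using norm0 norm_eq by simp
  have dist0: "sqrt (A + (s0 - f t)\<^sup>2) = lam * w"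
    using dist_along_normal[of t lam] lam
    by (simp add: x s0 w_def A_def dist_norm norm_Pair)
  have "(x - t) \<bullet> gf t + f t - s0 = lam * w\<^sup>2"
    by (simp add: x s0 w_def normal_len_sq power2_norm_eq_inner algebra_simps)
  then have tangent0: "((x - t) \<bullet> gf t + f t - s0) / w = lam * w"
    using \<open>w > 0\<close> by (simp add: power2_eq_square)
  have slope_neg: "-1 / w - s0 / (R + lam * w) < 0"
    using touching_slope_neg[OF assms] by (simp add: w_def)
  have pos_A: "0 < A + (s0 - f t)\<^sup>2"
    using dist0 lam \<open>w > 0\<close> by (metis mult_pos_pos real_sqrt_gt_0_iff)
  have pos_B: "0 < B + (s0 - 0)\<^sup>2"
    using root0 lam \<open>w > 0\<close> R_pos by (metis add_pos_pos mult_pos_pos real_sqrt_gt_0_iff)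
  have "(F has_real_derivative
      (s0 - f t) / sqrt (A + (s0 - f t)\<^sup>2) - ((s0 - 0) / sqrt (B + (s0 - 0)\<^sup>2) - 0)) (at s0)"
    unfolding F_def by (intro derivative_intros DERIV_sqrt_add_square pos_A pos_B)
  then have F_deriv: "(F has_real_derivative -1 / w - s0 / (R + lam * w)) (at s0)"
    using dist0 root0 lam \<open>w > 0\<close> by (simp add: s0)
  have "(G has_real_derivative
      (0 + 0 - 1) / w - ((s0 - 0) / sqrt (B + (s0 - 0)\<^sup>2) - 0)) (at s0)"
    unfolding G_def using \<open>w > 0\<close>
    by (intro derivative_intros DERIV_sqrt_add_square pos_B) (auto intro!: derivative_eq_intros)
  then have G_deriv: "(G has_real_derivative -1 / w - s0 / (R + lam * w)) (at s0)"
    using root0 by simp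
  have "F s0 = 0" "G s0 = 0" using dist0 root0 tangent0 by (simp_all add: F_def G_def)
  from down_crossing_squeeze[OF lower upper this F_deriv slope_neg G_deriv slope_neg]
  show "gap x s0 = 0" "\<exists>d>0. \<forall>h>0. h < d \<longrightarrow> gap x (s0 + h) < 0 \<and> gap x (s0 - h) > 0"
    by blast+
qed

lemma touching_nearest:
  assumes "touching x s t lam"
  shows "\<forall>z \<in> epi. dist (x, s) (t, f t) \<le> dist (x, s) z"
proof -
  have "dist (x, s) (t, f t) = lam * normal_len t"
    using assms dist_along_normal[of t lam] by (auto simp: touching_def)
  also have "\<dots> = norm (x, s) - R"
    using assms by (auto simp: touching_def)
  also have "\<dots> = infdist (x, s) epi"
    using touching_gap_down_crossing(1)[OF assms] by (simp add: gap_def)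
  finally show ?thesis using infdist_le by metis
qed

lemma touching_unique:
  assumes "touching x s t1 lam1" and "touching x s t2 lam2"
  shows "t1 = t2"
proof -
  have "(t1, f t1) = (t2, f t2)"
    using any_closest_point_unique[OF convex_epi closed_epi _ _
        touching_nearest[OF assms(1)] touching_nearest[OF assms(2)]]
    by simp
  then show ?thesis by simp
qed

lemma gap_zero_touching:
  assumes "gap x s = 0"
  shows "\<exists>t lam. touching x s t lam"
proof -
  define p where "p = closest_point epi (x, s)"
  have "p \<in> epi" and nearest: "\<forall>z \<in> epi. dist (x, s) p \<le> dist (x, s) z"
    using closest_point_exists[OF closed_epi epi_nonempty] by (auto simp: p_def)
  have "infdist (x, s) epi = dist (x, s) p"
    using infdist_le[OF \<open>p \<in> epi\<close>] nearest
    by (intro antisym) (auto simp: infdist_notempty[OF epi_nonempty] intro!: cINF_greatest epi_nonempty)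
  then have norm_eq: "norm (x, s) = R + dist (x, s) p" using assms by (simp add: gap_def)
  have "(x, s) \<notin> epi"
  proof
    assume "(x, s) \<in> epi"
    then have "dist (x, s) p \<le> dist (x, s) (x, s)" using nearest by blast
    with norm_gt_if_mem_epi[OF \<open>(x, s) \<in> epi\<close>] show False using norm_eq by simp
  qed
  obtain t y where p: "p = (t, y)" by (cases p)
  have "y = f t" and "s < f t"
    using nearest_point_of_epigraph[OF f_convex continuous_on_f, folded epi_def,
        OF \<open>(x, s) \<notin> epi\<close> \<open>p \<in> epi\<close>[unfolded p] nearest[unfolded p]] by simp_all
  have "dist (x, s) (t, f t) \<le> dist (x, s) (t', f t')" for t'
    using nearest \<open>y = f t\<close> by (simp add: p)
  then have "x = t + (f t - s) *\<^sub>R gf t" by (rule nearest_point_of_graph_normal[OF f_grad])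
  define lam where "lam = f t - s"
  have "lam > 0" "x = t + lam *\<^sub>R gf t" "s = f t - lam"
    using \<open>s < f t\<close> \<open>x = t + (f t - s) *\<^sub>R gf t\<close> by (simp_all add: lam_def)
  moreover have "norm (x, s) = R + lam * normal_len t"
    using norm_eq dist_along_normal[of t lam] \<open>y = f t\<close> \<open>lam > 0\<close> \<open>x = t + lam *\<^sub>R gf t\<close>
    by (simp add: p lam_def)
  ultimately show ?thesis unfolding touching_def by blast
qed

lemma gap_zero_unique:
  assumes "gap x s1 = 0" and "gap x s2 = 0"
  shows "s1 = s2"
  using continuous_down_crossing_zero_unique[OF continuous_on_gap _ assms]
    gap_zero_touching touching_gap_down_crossing(2) by blast

lemma slack_eq: "slack t = normal_len t * (R - alpha_fun f gf t)"
  using normal_len_pos[of t]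
  by (simp add: slack_def alpha_fun_def normal_len_def[symmetric] field_simps)

lemma mem_D_set_iff: "t \<in> D_set f gf R \<longleftrightarrow> slack t > 0"
  using normal_len_pos[of t] by (simp add: D_set_def slack_eq zero_less_mult_iff)

lemma x_map_eq: "x_map f gf R t = t + shift t *\<^sub>R gf t"
  using normal_len_pos[of t]
  by (simp add: x_map_def shift_def slack_eq excess_def normal_len_def[symmetric])

lemma norm_along_normal_sq:
  "(norm (t + lam *\<^sub>R gf t, f t - lam))\<^sup>2
     = R\<^sup>2 + excess t + 2 * lam * (t \<bullet> gf t - f t) + lam\<^sup>2 * (normal_len t)\<^sup>2"
proof -
  have "(norm (a, b))\<^sup>2 = (norm a)\<^sup>2 + b\<^sup>2" for a :: "real^'n" and b :: real
    by (simp add: norm_Pair)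
  then show ?thesis
    unfolding normal_len_sq excess_def power2_norm_eq_inner
    by (simp add: inner_commute power2_eq_square algebra_simps)
qed

lemma touching_iff:
  "touching x s t lam \<longleftrightarrow> t \<in> D_set f gf R \<and> lam = shift t \<and> x = x_map f gf R t \<and> s = f t - lam"
proof -
  have "norm (t + lam *\<^sub>R gf t, f t - lam) = R + lam * normal_len t \<longleftrightarrow>
      excess t = 2 * lam * slack t" if "lam > 0" for lam
  proof -
    have "0 < R + lam * normal_len t" using R_pos that normal_len_pos[of t] by (simp add: add_pos_pos)
    then have "norm (t + lam *\<^sub>R gf t, f t - lam) = R + lam * normal_len t \<longleftrightarrow>
        (norm (t + lam *\<^sub>R gf t, f t - lam))\<^sup>2 = (R + lam * normal_len t)\<^sup>2"
      by simp
    then show ?thesis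
      unfolding norm_along_normal_sq by (simp add: slack_def power2_eq_square algebra_simps)
  qed
  moreover have "lam > 0 \<and> excess t = 2 * lam * slack t \<longleftrightarrow> slack t > 0 \<and> lam = shift t"
    using excess_pos[of t] by (auto simp: shift_def zero_less_mult_iff)
  ultimately show ?thesis
    unfolding touching_def mem_D_set_iff x_map_eq by auto
qed

lemma bij_betw_x_map: "bij_betw (x_map f gf R) (D_set f gf R) UNIV"
proof (rule bij_betw_imageI)
  show "inj_on (x_map f gf R) (D_set f gf R)"
  proof (rule inj_onI)
    fix t1 t2
    assume "t1 \<in> D_set f gf R" "t2 \<in> D_set f gf R" and "x_map f gf R t1 = x_map f gf R t2"
    then have touch1: "touching (x_map f gf R t1) (f t1 - shift t1) t1 (shift t1)"
      and touch2: "touching (x_map f gf R t1) (f t2 - shift t2) t2 (shift t2)"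
      by (simp_all add: touching_iff)
    have "f t1 - shift t1 = f t2 - shift t2"
      using gap_zero_unique touching_gap_down_crossing(1)[OF touch1]
        touching_gap_down_crossing(1)[OF touch2] by blast
    with touch1 touch2 show "t1 = t2" using touching_unique by metis
  qed
  show "x_map f gf R ` D_set f gf R = UNIV"
  proof (intro set_eqI iffI)
    fix x :: "real^'n"
    obtain s where "gap x s = 0" using gap_has_zero by blast
    then obtain t lam where "touching x s t lam" using gap_zero_touching by blast
    then show "x \<in> x_map f gf R ` D_set f gf R" by (auto simp: touching_iff)
  qed simp
qed

end

section \<open>The Jacobian\<close>

locale twice_diff_convex_graph_outside_ball = convex_graph_outside_ball f gf R
  for f :: "real^'n \<Rightarrow> real" and gf and R +
  fixes Hf :: "real^'n \<Rightarrow> real^'n \<Rightarrow> real^'n"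
  assumes gf_deriv: "\<And>t. (gf has_derivative Hf t) (at t)"
begin

lemma has_derivative_excess:
  "(excess has_derivative (\<lambda>h. 2 * (t \<bullet> h) + 2 * f t * (gf t \<bullet> h))) (at t)"
proof -
  have "excess = (\<lambda>t. t \<bullet> t + (f t)\<^sup>2 - R\<^sup>2)"
    by (intro ext) (simp add: excess_def dot_square_norm)
  then show ?thesis
    by (auto intro!: derivative_eq_intros f_grad simp: inner_commute)
qed

lemma has_derivative_normal_len:
  "(normal_len has_derivative (\<lambda>h. (gf t \<bullet> Hf t h) / normal_len t)) (at t)"
proof -
  have "normal_len = (\<lambda>t. sqrt (1 + gf t \<bullet> gf t))"
    by (intro ext) (simp add: normal_len_def power2_norm_eq_inner)
  moreover have "0 < 1 + gf t \<bullet> gf t" by (simp add: add_pos_nonneg)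
  ultimately show ?thesis
    by (auto intro!: derivative_eq_intros gf_deriv simp: inner_commute field_simps)
qed

lemma has_derivative_slack:
  "(slack has_derivative (\<lambda>h. R * ((gf t \<bullet> Hf t h) / normal_len t) - t \<bullet> Hf t h)) (at t)"
  unfolding slack_def[abs_def]
  by (auto intro!: derivative_eq_intros f_grad gf_deriv has_derivative_normal_len
      simp: inner_commute)

definition shift_deriv :: "real^'n \<Rightarrow> real^'n \<Rightarrow> real"
  where "shift_deriv t h = (2 * (t \<bullet> h) + 2 * f t * (gf t \<bullet> h)
      - 2 * shift t * (R * ((gf t \<bullet> Hf t h) / normal_len t) - t \<bullet> Hf t h)) / (2 * slack t)"

lemma has_derivative_x_map:
  assumes "slack t \<noteq> 0"
  shows "(x_map f gf R has_derivative
    (\<lambda>h. h + shift_deriv t h *\<^sub>R gf t + shift t *\<^sub>R Hf t h)) (at t)"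
proof -
  have "(shift has_derivative shift_deriv t) (at t)"
    unfolding shift_def[abs_def]
    by (rule has_derivative_eq_rhs, (rule derivative_intros has_derivative_excess has_derivative_slack)+)
       (use assms in \<open>auto simp: shift_deriv_def shift_def field_simps\<close>)
  then show ?thesis
    unfolding x_map_eq[abs_def]
    by (auto intro!: derivative_eq_intros gf_deriv simp: algebra_simps)
qed

text \<open>On the kernel, \<open>shift t *\<^sub>R Hf t h = - h - c *\<^sub>R gf t\<close> with \<open>c = shift_deriv t h\<close>;
  substituting this into the derivative of \<open>2 * shift t * slack t = excess t\<close> leaves
  \<open>(R + f t * normal_len t) * (c - gf t \<bullet> h) = 0\<close>.\<close>
lemma shift_deriv_on_kernel:
  assumes D: "t \<in> D_set f gf R"
    and kernel: "h + shift_deriv t h *\<^sub>R gf t + shift t *\<^sub>R Hf t h = 0"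
  shows "shift_deriv t h = gf t \<bullet> h"
proof -
  define g H lam c w M ft where "g = gf t" and "H = Hf t h" and "lam = shift t"
    and "c = shift_deriv t h" and "w = normal_len t" and "M = slack t" and "ft = f t"
  have "M > 0" using D by (simp add: mem_D_set_iff M_def)
  have "w > 0" using normal_len_pos by (simp add: w_def)
  have "R + ft * w > 0" using R_pos f_pos[of t] \<open>w > 0\<close> by (simp add: ft_def add_pos_pos)
  have w_sq: "w * w = 1 + g \<bullet> g"
    using normal_len_sq[of t, unfolded power2_norm_eq_inner] by (simp add: w_def g_def power2_eq_square)
  have kernel': "h + c *\<^sub>R g + lam *\<^sub>R H = 0"
    using kernel by (simp add: c_def g_def lam_def H_def)
  have gH: "lam * (g \<bullet> H) = - (g \<bullet> h) - c * (g \<bullet> g)"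
    using arg_cong[OF kernel', of "\<lambda>v. g \<bullet> v"] by (simp add: inner_add_right)
  have tH: "lam * (t \<bullet> H) = - (t \<bullet> h) - c * (t \<bullet> g)"
    using arg_cong[OF kernel', of "\<lambda>v. t \<bullet> v"] by (simp add: inner_add_right)
  have "c * M * w = ((t \<bullet> h) + ft * (g \<bullet> h) - (R * (lam * (g \<bullet> H)) / w - lam * (t \<bullet> H))) * w"
    using \<open>M > 0\<close>
    by (simp add: c_def shift_deriv_def lam_def M_def ft_def g_def H_def w_def field_simps)
  also have "\<dots> = ft * (g \<bullet> h) * w + R * (g \<bullet> h) + c * (R * (g \<bullet> g) - (t \<bullet> g) * w)"
    unfolding gH tH using \<open>w > 0\<close> by (simp add: field_simps)
  finally have "c * (M * w) = ft * (g \<bullet> h) * w + R * (g \<bullet> h) + c * (R * (g \<bullet> g) - (t \<bullet> g) * w)"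
    by simp
  moreover have "M * w = R * (1 + g \<bullet> g) - (t \<bullet> g) * w + ft * w"
    using w_sq by (simp add: M_def slack_def w_def g_def ft_def algebra_simps)
  ultimately have "c * (R + ft * w) = (g \<bullet> h) * (R + ft * w)"
    by (simp add: algebra_simps)
  with \<open>R + ft * w > 0\<close> show ?thesis by (simp add: c_def g_def)
qed

lemma x_map_derivative_kernel:
  assumes D: "t \<in> D_set f gf R"
    and kernel: "h + shift_deriv t h *\<^sub>R gf t + shift t *\<^sub>R Hf t h = 0"
  shows "h = 0"
proof -
  have "0 = h \<bullet> (h + shift_deriv t h *\<^sub>R gf t + shift t *\<^sub>R Hf t h)"
    by (simp add: kernel)
  also have "\<dots> = h \<bullet> h + (gf t \<bullet> h)\<^sup>2 + shift t * (h \<bullet> Hf t h)"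
    using shift_deriv_on_kernel[OF assms]
    by (simp add: inner_add_right inner_commute power2_eq_square)
  finally have "h \<bullet> h + (gf t \<bullet> h)\<^sup>2 + shift t * (h \<bullet> Hf t h) = 0" ..
  moreover have "0 \<le> h \<bullet> Hf t h"
    by (rule convex_on_gradient_derivative_nonneg[OF f_convex f_grad gf_deriv])
  moreover have "shift t > 0"
    using D excess_pos[of t] by (simp add: mem_D_set_iff shift_def)
  ultimately have "h \<bullet> h = 0"
    by (smt (verit) inner_ge_zero mult_nonneg_nonneg zero_le_power2)
  then show "h = 0" by simp
qed

lemma x_map_jacobian_nonzero:
  assumes D: "t \<in> D_set f gf R"
  shows "\<exists>x'. (x_map f gf R has_derivative x') (at t) \<and> det (matrix x') \<noteq> 0"
proof -
  define x' where "x' = (\<lambda>h. h + shift_deriv t h *\<^sub>R gf t + shift t *\<^sub>R Hf t h)"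
  have "slack t \<noteq> 0" using D by (simp add: mem_D_set_iff)
  then have deriv: "(x_map f gf R has_derivative x') (at t)"
    unfolding x'_def by (rule has_derivative_x_map)
  then have "linear x'" by (rule has_derivative_linear)
  moreover have "x' h = 0 \<Longrightarrow> h = 0" for h
    unfolding x'_def by (rule x_map_derivative_kernel[OF D])
  ultimately have "inj x'" by (simp add: linear_injective_0)
  with \<open>linear x'\<close> have "det (matrix x') \<noteq> 0" by (simp add: det_nz_iff_inj)
  with deriv show ?thesis by blast
qed

end

theorem theorem10:
  fixes f :: "real^'n \<Rightarrow> real" and gf :: "real^'n \<Rightarrow> real^'n"
    and Hf :: "real^'n \<Rightarrow> real^'n \<Rightarrow> real^'n" and R :: real
  assumes R_pos: "R > 0"
    and f_pos: "\<forall>t. f t > 0"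
    and f_grad: "\<forall>t. (f has_derivative (\<lambda>h. gf t \<bullet> h)) (at t)"
    and gf_deriv: "\<forall>t. (gf has_derivative Hf t) (at t)"
    and Hf_cont: "continuous_on UNIV (\<lambda>t. matrix (Hf t))"
    and f_convex: "convex_on UNIV f"
    and f_big: "\<forall>t. (norm t)\<^sup>2 + (f t)\<^sup>2 > R\<^sup>2"
  shows "bij_betw (x_map f gf R) (D_set f gf R) UNIV \<and>
    (\<forall>t \<in> D_set f gf R. \<exists>x'. (x_map f gf R has_derivative x') (at t) \<and> det (matrix x') \<noteq> 0)"
proof -
  interpret twice_diff_convex_graph_outside_ball f gf R Hf
    by unfold_locales (use R_pos f_pos f_grad gf_deriv f_convex f_big in auto)
  show ?thesis using bij_betw_x_map x_map_jacobian_nonzero by simp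
qed

end
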